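(* Let $(J,\mathcal F)$ and coefficients $w^S_j>0$ ($j\in S\in\mathcal F$) be as in the context. For every input $\mathbf c\in\mathbb R^J$, algorithms $\mathrm{AG}_1$ and $\mathrm{AG}_2$ are equivalent: when ties in the minimizations are broken in the same way, they produce the same output $(\mathit{ADMISSIBLE},\boldsymbol\pi,\boldsymbol\nu)$.
   Context: $J$ finite, $|J|=n$; $\mathcal F\subseteq2^J$, $\emptyset\in\mathcal F$, each nonempty $S\in\mathcal F$ has nonempty $\partial^-S=\{j\in S:S\setminus\{j\}\in\mathcal F\}$, each $S\in\mathcal F$, $S\ne J$, has $j\in J\setminus S$ with $S\cup\{j\}\in\mathcal F$. $\mathrm{AG}_1$ on input $\mathbf c$: $S_1=J$, $y^{S_1}=\min\{c_j/w^{S_1}_j:j\in\partial^-S_1\}$, $\pi_1$ a minimizer, $\nu_{\pi_1}=y^{S_1}$; for $k=2..n$: $S_k=S_{k-1}\setminus\{\pi_{k-1}\}$, $y^{S_k}=\min\{(c_j-\sum_{l=1}^{k-1}y^{S_l}w^{S_l}_j)/w^{S_k}_j:j\in\partial^-S_k\}$, $\pi_k$ a minimizer, $\nu_{\pi_k}=\nu_{\pi_{k-1}}+y^{S_k}$. $\mathrm{AG}_2$ on input $\mathbf c$: $S_1=J$, $\nu^{S_1}_j=c_j/w^{S_1}_j$ ($j\in J$), $\pi_1\in\arg\min\{\nu^{S_1}_j:j\in\partial^-S_1\}$, $\nu_{\pi_1}=\nu^{S_1}_{\pi_1}$; for $k=2..n$: $S_k=S_{k-1}\setminus\{\pi_{k-1}\}$,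 $\nu^{S_k}_j=\nu^{S_{k-1}}_j+\left(\frac{w^{S_{k-1}}_j}{w^{S_k}_j}-1\right)[\nu^{S_{k-1}}_j-\nu^{S_{k-1}}_{\pi_{k-1}}]$ for $j\in S_k$, $\pi_k\in\arg\min\{\nu^{S_k}_j:j\in\partial^-S_k\}$, $\nu_{\pi_k}=\nu^{S_k}_{\pi_k}$. Both set $\mathit{ADMISSIBLE}=\mathit{TRUE}$ if $\nu_{\pi_1}\le\cdots\le\nu_{\pi_n}$ and $\mathit{FALSE}$ otherwise. *)

theory Defs
  imports Complex_Main
begin

definition set_system :: "'a set \<Rightarrow> 'a set set \<Rightarrow> bool" where
  "set_system J F \<longleftrightarrow> finite J \<and> F \<subseteq> Pow J \<and> {} \<in> F
     \<and> (\<forall>S\<in>F. S \<noteq> {} \<longrightarrow> (\<exists>j\<in>S. S - {j} \<in> F))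
     \<and> (\<forall>S\<in>F. S \<noteq> J \<longrightarrow> (\<exists>j\<in>J - S. insert j S \<in> F))"

definition dminus :: "'a set set \<Rightarrow> 'a set \<Rightarrow> 'a set" where
  "dminus F S = {j \<in> S. S - {j} \<in> F}"

(* Steps are indexed from 0: p 0, ..., p (n-1) correspond to pi_1, ..., pi_n;
   Sset J p k corresponds to S_{k+1}. *)
primrec Sset :: "'a set \<Rightarrow> (nat \<Rightarrow> 'a) \<Rightarrow> nat \<Rightarrow> 'a set" where
  "Sset J p 0 = J"
| "Sset J p (Suc k) = Sset J p k - {p k}"

(* ag1_ys ... k = [y^{S_1}, ..., y^{S_k}] *)
primrec ag1_ys :: "'a set \<Rightarrow> 'a set set \<Rightarrow> ('a set \<Rightarrow> 'a \<Rightarrow> real) \<Rightarrow> ('a \<Rightarrow> real)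
      \<Rightarrow> (nat \<Rightarrow> 'a) \<Rightarrow> nat \<Rightarrow> real list" where
  "ag1_ys J F w c p 0 = []"
| "ag1_ys J F w c p (Suc k) =
     (let ys = ag1_ys J F w c p k in
       ys @ [Min ((\<lambda>j. (c j - (\<Sum>l<k. ys ! l * w (Sset J p l) j)) / w (Sset J p k) j)
                   ` dminus F (Sset J p k))])"

definition ag1_val :: "'a set \<Rightarrow> 'a set set \<Rightarrow> ('a set \<Rightarrow> 'a \<Rightarrow> real) \<Rightarrow> ('a \<Rightarrow> real)
      \<Rightarrow> (nat \<Rightarrow> 'a) \<Rightarrow> nat \<Rightarrow> 'a \<Rightarrow> real" where
  "ag1_val J F w c p k j =
     (c j - (\<Sum>l<k. ag1_ys J F w c p k ! l * w (Sset J p l) j)) / w (Sset J p k) j"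

definition ag1_y :: "'a set \<Rightarrow> 'a set set \<Rightarrow> ('a set \<Rightarrow> 'a \<Rightarrow> real) \<Rightarrow> ('a \<Rightarrow> real)
      \<Rightarrow> (nat \<Rightarrow> 'a) \<Rightarrow> nat \<Rightarrow> real" where
  "ag1_y J F w c p k = ag1_ys J F w c p (Suc k) ! k"

definition ag1_ok :: "'a set \<Rightarrow> 'a set set \<Rightarrow> ('a set \<Rightarrow> 'a \<Rightarrow> real) \<Rightarrow> ('a \<Rightarrow> real)
      \<Rightarrow> (nat \<Rightarrow> 'a) \<Rightarrow> nat \<Rightarrow> bool" where
  "ag1_ok J F w c p k \<longleftrightarrow> p k \<in> dminus F (Sset J p k)
      \<and> ag1_val J F w c p k (p k) = ag1_y J F w c p k"

definition ag1_nu :: "'a set \<Rightarrow> 'a set set \<Rightarrow> ('a set \<Rightarrow> 'a \<Rightarrow> real) \<Rightarrow> ('a \<Rightarrow> real)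
      \<Rightarrow> (nat \<Rightarrow> 'a) \<Rightarrow> nat \<Rightarrow> real" where
  "ag1_nu J F w c p k = (\<Sum>l\<le>k. ag1_y J F w c p l)"

(* ag2_vec ... k j = nu^{S_{k+1}}_j *)
primrec ag2_vec :: "'a set \<Rightarrow> ('a set \<Rightarrow> 'a \<Rightarrow> real) \<Rightarrow> ('a \<Rightarrow> real)
      \<Rightarrow> (nat \<Rightarrow> 'a) \<Rightarrow> nat \<Rightarrow> 'a \<Rightarrow> real" where
  "ag2_vec J w c p 0 = (\<lambda>j. c j / w J j)"
| "ag2_vec J w c p (Suc k) = (\<lambda>j.
     ag2_vec J w c p k j
     + (w (Sset J p k) j / w (Sset J p (Suc k)) j - 1)
       * (ag2_vec J w c p k j - ag2_vec J w c p k (p k)))"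

definition ag2_ok :: "'a set \<Rightarrow> 'a set set \<Rightarrow> ('a set \<Rightarrow> 'a \<Rightarrow> real) \<Rightarrow> ('a \<Rightarrow> real)
      \<Rightarrow> (nat \<Rightarrow> 'a) \<Rightarrow> nat \<Rightarrow> bool" where
  "ag2_ok J F w c p k \<longleftrightarrow> p k \<in> dminus F (Sset J p k)
      \<and> (\<forall>j\<in>dminus F (Sset J p k). ag2_vec J w c p k (p k) \<le> ag2_vec J w c p k j)"

definition ag2_nu :: "'a set \<Rightarrow> ('a set \<Rightarrow> 'a \<Rightarrow> real) \<Rightarrow> ('a \<Rightarrow> real)
      \<Rightarrow> (nat \<Rightarrow> 'a) \<Rightarrow> nat \<Rightarrow> real" where
  "ag2_nu J w c p k = ag2_vec J w c p k (p k)"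

definition admissible :: "nat \<Rightarrow> (nat \<Rightarrow> real) \<Rightarrow> bool" where
  "admissible n nu \<longleftrightarrow> (\<forall>k. Suc k < n \<longrightarrow> nu k \<le> nu (Suc k))"

end

theory Submission
  imports Defs
begin

(*
  For j in S_k, the AG_2 value nu^{S_k}_j equals the quantity
  (c_j - sum_{l<k} y^{S_l} w^{S_l}_j) / w^{S_k}_j minimised by AG_1, shifted by the
  constant sum_{l<k} y^{S_l}: the AG_2 update rule is exactly what this formula does
  when S_k loses pi_k.  Hence in every step both algorithms minimise the same function
  up to an additive constant, admit the same choices of pi_k, and compute the same
  nu_{pi_k}.
*)

lemma length_ag1_ys [simp]: "length (ag1_ys J F w c p k) = k"
  by (induction k) (simp_all add: Let_def)

lemma nth_ag1_ys: "l < k \<Longrightarrow> ag1_ys J F w c p k ! l = ag1_y J F w c p l"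
proof (induction k)
  case (Suc k)
  then show ?case
    by (cases "l = k") (auto simp: ag1_y_def Let_def nth_append)
qed simp

lemma ag1_val_eq:
  "ag1_val J F w c p k j =
     (c j - (\<Sum>l<k. ag1_y J F w c p l * w (Sset J p l) j)) / w (Sset J p k) j"
  unfolding ag1_val_def by (simp add: nth_ag1_ys)

lemma ag1_y_eq_Min:
  "ag1_y J F w c p k = Min (ag1_val J F w c p k ` dminus F (Sset J p k))"
  unfolding ag1_y_def ag1_val_def by (simp add: Let_def nth_append)

lemma Sset_subset: "Sset J p k \<subseteq> J"
  by (induction k) auto

lemma set_system_top_in:
  assumes "set_system J F"
  shows "J \<in> F"
proof -
  have fin: "finite J" and sub: "F \<subseteq> Pow J" and "{} \<in> F"
    and ext: "\<forall>S\<in>F. S \<noteq> J \<longrightarrow> (\<exists>j\<in>J - S. insert j S \<in> F)"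
    using assms unfolding set_system_def by auto
  have "finite F"
    using finite_subset[OF sub] fin by simp
  then obtain S where S: "S \<in> F" and S_max: "\<And>T. T \<in> F \<Longrightarrow> S \<subseteq> T \<Longrightarrow> S = T"
    using finite_has_maximal[of F] \<open>{} \<in> F\<close> by blast
  show ?thesis
  proof (rule ccontr)
    assume "J \<notin> F"
    with S have "S \<noteq> J"
      by blast
    with S ext obtain j where "j \<in> J - S" "insert j S \<in> F"
      by blast
    then show False
      using S_max[of "insert j S"] by blast
  qed
qed

lemma Sset_in_family:
  assumes "J \<in> F" "\<forall>l<k. p l \<in> dminus F (Sset J p l)"
  shows "Sset J p k \<in> F"
  using assms by (induction k) (auto simp: dminus_def)

lemma admissible_cong:
  assumes "\<And>k. k < n \<Longrightarrow> f k = g k"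
  shows "admissible n f \<longleftrightarrow> admissible n g"
  using assms unfolding admissible_def by (metis Suc_lessD)

locale greedy_setting =
  fixes J :: "'a set" and F :: "'a set set" and w :: "'a set \<Rightarrow> 'a \<Rightarrow> real"
    and c :: "'a \<Rightarrow> real" and p :: "nat \<Rightarrow> 'a"
  assumes sys: "set_system J F"
    and wpos: "\<forall>S\<in>F. \<forall>j\<in>S. w S j > 0"
begin

lemma Sset_in_family_if_ag1_ok:
  "\<forall>l<k. ag1_ok J F w c p l \<Longrightarrow> Sset J p k \<in> F"
  using Sset_in_family[OF set_system_top_in[OF sys]] by (simp add: ag1_ok_def)

lemma ag2_vec_eq_ag1_val:
  assumes "\<forall>l<k. ag1_ok J F w c p l" "j \<in> Sset J p k"
  shows "ag2_vec J w c p k j = ag1_val J F w c p k j + (\<Sum>l<k. ag1_y J F w c p l)"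
  using assms
proof (induction k arbitrary: j)
  case 0
  then show ?case by (simp add: ag1_val_eq)
next
  case (Suc k)
  let ?S = "Sset J p k" and ?S' = "Sset J p (Suc k)" and ?y = "ag1_y J F w c p"
  have ok: "\<forall>l<k. ag1_ok J F w c p l" "ag1_ok J F w c p k"
    using Suc.prems(1) by auto
  have j: "j \<in> ?S" "j \<in> ?S'"
    using Suc.prems(2) by auto
  have pk: "p k \<in> ?S" "ag1_val J F w c p k (p k) = ?y k"
    using ok(2) by (auto simp: ag1_ok_def dminus_def)
  have "?S \<in> F" "?S' \<in> F"
    using Sset_in_family_if_ag1_ok ok(1) Suc.prems(1) by blast+
  with wpos j have "w ?S j > 0" "w ?S' j > 0"
    by auto
  define r where "r = c j - (\<Sum>l<k. ?y l * w (Sset J p l) j)"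
  define N where "N = (\<Sum>l<k. ?y l)"
  have vec_j: "ag2_vec J w c p k j = r / w ?S j + N"
    using Suc.IH[OF ok(1) j(1)] by (simp add: ag1_val_eq r_def N_def)
  have vec_pk: "ag2_vec J w c p k (p k) = ?y k + N"
    using Suc.IH[OF ok(1) pk(1)] pk(2) by (simp add: N_def)
  have "ag2_vec J w c p (Suc k) j = (r - ?y k * w ?S j) / w ?S' j + (N + ?y k)"
    using \<open>w ?S j > 0\<close> \<open>w ?S' j > 0\<close> by (simp add: vec_j vec_pk field_simps)
  also have "\<dots> = ag1_val J F w c p (Suc k) j + (\<Sum>l<Suc k. ?y l)"
    by (simp add: ag1_val_eq r_def N_def algebra_simps)
  finally show ?case .
qed

lemma ag1_ok_iff_ag2_ok:
  assumes ok: "\<forall>l<k. ag1_ok J F w c p l"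
  shows "ag1_ok J F w c p k \<longleftrightarrow> ag2_ok J F w c p k"
proof (cases "p k \<in> dminus F (Sset J p k)")
  case True
  let ?D = "dminus F (Sset J p k)" and ?val = "ag1_val J F w c p k"
  have D_fin: "finite ?D"
  proof (rule finite_subset)
    show "?D \<subseteq> J"
      using Sset_subset[of J p k] by (auto simp: dminus_def)
    show "finite J"
      using sys by (simp add: set_system_def)
  qed
  have vec_D: "ag2_vec J w c p k j = ?val j + (\<Sum>l<k. ag1_y J F w c p l)" if "j \<in> ?D" for j
    using ag2_vec_eq_ag1_val[OF ok] that by (simp add: dminus_def)
  have "ag1_ok J F w c p k \<longleftrightarrow> ?val (p k) = Min (?val ` ?D)"
    using True by (simp add: ag1_ok_def ag1_y_eq_Min)
  also have "\<dots> \<longleftrightarrow> (\<forall>j\<in>?D. ?val (p k) \<le> ?val j)"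
    using True D_fin by (subst eq_Min_iff) auto
  also have "\<dots> \<longleftrightarrow> ag2_ok J F w c p k"
    using True by (simp add: ag2_ok_def vec_D)
  finally show ?thesis .
qed (simp add: ag1_ok_def ag2_ok_def)

lemma ag1_ok_prefix_iff_ag2_ok_prefix:
  "(\<forall>l<k. ag1_ok J F w c p l) \<longleftrightarrow> (\<forall>l<k. ag2_ok J F w c p l)"
proof (induction k)
  case (Suc k)
  then show ?case
    using ag1_ok_iff_ag2_ok[of k] by (auto simp: All_less_Suc)
qed simp

lemma ag1_nu_eq_ag2_nu:
  assumes "\<forall>l\<le>k. ag1_ok J F w c p l"
  shows "ag1_nu J F w c p k = ag2_nu J w c p k"
proof -
  have ok: "\<forall>l<k. ag1_ok J F w c p l" "ag1_ok J F w c p k"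
    using assms by auto
  then have "p k \<in> Sset J p k" "ag1_val J F w c p k (p k) = ag1_y J F w c p k"
    by (auto simp: ag1_ok_def dminus_def)
  then show ?thesis
    using ag2_vec_eq_ag1_val[OF ok(1)]
    by (simp add: ag1_nu_def ag2_nu_def lessThan_Suc_atMost[symmetric])
qed

end

theorem theorem3:
  fixes J :: "'a set" and F :: "'a set set" and w :: "'a set \<Rightarrow> 'a \<Rightarrow> real"
    and c :: "'a \<Rightarrow> real" and p :: "nat \<Rightarrow> 'a"
  assumes sys: "set_system J F"
    and wpos: "\<forall>S\<in>F. \<forall>j\<in>S. w S j > 0"
  shows "(\<forall>k\<le>card J. (\<forall>l<k. ag1_ok J F w c p l) \<longleftrightarrow> (\<forall>l<k. ag2_ok J F w c p l))
       \<and> (\<forall>k<card J. (\<forall>l\<le>k. ag1_ok J F w c p l) \<longrightarrow> ag1_nu J F w c p k = ag2_nu J w c p k)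
       \<and> ((\<forall>l<card J. ag1_ok J F w c p l) \<longrightarrow>
            (admissible (card J) (ag1_nu J F w c p) \<longleftrightarrow> admissible (card J) (ag2_nu J w c p)))"
proof -
  interpret greedy_setting J F w c p
    using sys wpos by unfold_locales
  show ?thesis
  proof (intro conjI allI impI)
    fix k
    show "(\<forall>l<k. ag1_ok J F w c p l) \<longleftrightarrow> (\<forall>l<k. ag2_ok J F w c p l)"
      by (rule ag1_ok_prefix_iff_ag2_ok_prefix)
  next
    fix k
    assume "\<forall>l\<le>k. ag1_ok J F w c p l"
    then show "ag1_nu J F w c p k = ag2_nu J w c p k"
      by (rule ag1_nu_eq_ag2_nu)
  next
    assume ok: "\<forall>l<card J. ag1_ok J F w c p l"
    show "admissible (card J) (ag1_nu J F w c p) \<longleftrightarrow> admissible (card J) (ag2_nu J w c p)"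
    proof (rule admissible_cong)
      fix k
      assume "k < card J"
      with ok show "ag1_nu J F w c p k = ag2_nu J w c p k"
        using ag1_nu_eq_ag2_nu[of k] by simp
    qed
  qed
qed

end
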